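(* Let $\mathcal{H}=(V,E)$ be a linear hypergraph with $n$ vertices satisfying $\mathrm{ar}(\mathcal{H})\ge n^{1/2}$. Then $\mathrm{q}(\mathcal{H})\le n$.
   Context: A hypergraph $\mathcal{H}=(V,E)$ has a finite vertex set $V$ and a finite set $E$ of nonempty subsets of $V$ (hyperedges); linear means distinct hyperedges share at most one vertex. The antirank $\mathrm{ar}(\mathcal{H})$ is the minimum cardinality of a hyperedge ($\infty$ if there are none). The chromatic index $\mathrm{q}(\mathcal{H})$ is the least number of colors in a coloring of hyperedges where distinct intersecting hyperedges get different colors. *)

theory Defs
  imports "HOL-Analysis.Analysis"
begin

definition hypergraph :: "'a set \<Rightarrow> 'a set set \<Rightarrow> bool" where
  "hypergraph V E \<longleftrightarrow> finite V \<and> finite E \<and> (\<forall>e\<in>E. e \<noteq> {} \<and> e \<subseteq> V)"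

definition linear_hypergraph :: "'a set \<Rightarrow> 'a set set \<Rightarrow> bool" where
  "linear_hypergraph V E \<longleftrightarrow> hypergraph V E \<and>
     (\<forall>e\<in>E. \<forall>f\<in>E. e \<noteq> f \<longrightarrow> card (e \<inter> f) \<le> 1)"

definition antirank :: "'a set set \<Rightarrow> ereal" where
  "antirank E = (if E = {} then \<infinity> else ereal (real (Min (card ` E))))"

definition proper_edge_coloring :: "'a set set \<Rightarrow> nat \<Rightarrow> ('a set \<Rightarrow> nat) \<Rightarrow> bool" where
  "proper_edge_coloring E k c \<longleftrightarrow> (\<forall>e\<in>E. c e < k) \<and>
     (\<forall>e\<in>E. \<forall>f\<in>E. e \<noteq> f \<and> e \<inter> f \<noteq> {} \<longrightarrow> c e \<noteq> c f)"

definition chromatic_index :: "'a set set \<Rightarrow> nat" where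
  "chromatic_index E = (LEAST k. \<exists>c. proper_edge_coloring E k c)"

end

theory Submission
  imports Defs
begin

(* Induct on the number of edges. If some edge meets fewer than n other edges, colour the
   others and give it a colour none of its neighbours uses. Otherwise let e be an edge of
   minimum size k, so k * k \<ge> n. The edges through a vertex v of e pairwise meet only in v,
   so the d(v) edges through v cover at least d(v) (k - 1) + 1 of the n vertices. Summing
   d(v) - 1 over v \<in> e counts the neighbours of e and gives n (k - 1) \<le> k (n - k), i.e.
   k * k \<le> n. Hence k * k = n and every inequality is tight, which makes the hypergraph an
   affine plane of order k. Colouring each line by the line through a fixed point parallel
   to it uses k + 1 \<le> n colours. *)

definition star :: "'a set set \<Rightarrow> 'a \<Rightarrow> 'a set set" where
  "star E v = {e \<in> E. v \<in> e}"

definition edge_neighbours :: "'a set set \<Rightarrow> 'a set \<Rightarrow> 'a set set" where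
  "edge_neighbours E e = {f \<in> E. f \<noteq> e \<and> f \<inter> e \<noteq> {}}"

lemma chromatic_index_le:
  assumes "proper_edge_coloring E k c"
  shows "chromatic_index E \<le> k"
  unfolding chromatic_index_def using assms by (blast intro: Least_le)

lemma proper_edge_coloring_mono:
  "proper_edge_coloring E k c \<Longrightarrow> k \<le> l \<Longrightarrow> proper_edge_coloring E l c"
  unfolding proper_edge_coloring_def by fastforce

lemma proper_edge_coloring_from_labels:
  assumes "finite A" and "\<forall>e\<in>E. r e \<in> A"
    and "\<forall>e\<in>E. \<forall>f\<in>E. e \<noteq> f \<and> e \<inter> f \<noteq> {} \<longrightarrow> r e \<noteq> r f"
  shows "\<exists>c. proper_edge_coloring E (card A) c"
proof -
  obtain idx where idx: "bij_betw idx A {0..<card A}"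
    using ex_bij_betw_finite_nat[OF assms(1)] by blast
  have "proper_edge_coloring E (card A) (idx \<circ> r)"
    unfolding proper_edge_coloring_def
    using assms(2,3) bij_betwE[OF idx] inj_onD[OF bij_betw_imp_inj_on[OF idx]]
    by (metis atLeastLessThan_iff comp_apply)
  then show ?thesis by blast
qed

lemma proper_edge_coloring_extend:
  assumes "finite E" and c: "proper_edge_coloring (E - {e}) k c"
    and few: "card (edge_neighbours E e) < k"
  shows "\<exists>c'. proper_edge_coloring E k c'"
proof -
  have "finite (c ` edge_neighbours E e)"
    using assms(1) by (simp add: edge_neighbours_def)
  moreover have "card (c ` edge_neighbours E e) < card {0..<k}"
    using card_image_le[of "edge_neighbours E e" c] assms(1) few
    by (simp add: edge_neighbours_def)
  ultimately obtain j where j: "j < k" "j \<notin> c ` edge_neighbours E e"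
    by (metis atLeastLessThan_iff card_mono linorder_not_le subsetI zero_le)
  have "proper_edge_coloring E k (c(e := j))"
    using c j unfolding proper_edge_coloring_def edge_neighbours_def
    by (auto simp: Int_commute)
  then show ?thesis by blast
qed

lemma square_le_if_mult_le:
  fixes n k :: nat
  assumes "n * (k - 1) \<le> k * (n - k)" and "k \<le> n"
  shows "k * k \<le> n"
proof (cases k)
  case (Suc j)
  obtain m where m: "n = k + m" using assms(2) le_Suc_ex by blast
  have "(Suc j + m) * j \<le> Suc j * m" using assms(1) unfolding Suc m by simp
  then have "j * j + j \<le> m" by (simp add: algebra_simps)
  then show ?thesis unfolding m Suc by (simp add: algebra_simps)
qed simp

locale linear_hg =
  fixes V :: "'a set" and E :: "'a set set"
  assumes linear: "linear_hypergraph V E"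
begin

lemma finite_V: "finite V"
  and finite_E: "finite E"
  and edge_subset: "e \<in> E \<Longrightarrow> e \<subseteq> V"
  and edge_nonempty: "e \<in> E \<Longrightarrow> e \<noteq> {}"
  and card_edge_inter_le: "e \<in> E \<Longrightarrow> f \<in> E \<Longrightarrow> e \<noteq> f \<Longrightarrow> card (e \<inter> f) \<le> 1"
  using linear unfolding linear_hypergraph_def hypergraph_def by blast+

lemma finite_edge: "e \<in> E \<Longrightarrow> finite e"
  using edge_subset finite_V finite_subset by blast

lemma finite_star: "finite (star E v)"
  using finite_E by (simp add: star_def)

lemma edge_inter_eq:
  assumes "e \<in> E" "f \<in> E" "e \<noteq> f" "v \<in> e" "v \<in> f"
  shows "e \<inter> f = {v}"
proof -
  have "finite (e \<inter> f)" using finite_edge assms(1) by blast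
  moreover have "card (e \<inter> f) \<le> Suc 0"
    using card_edge_inter_le[OF assms(1-3)] by simp
  ultimately have "\<forall>a\<in>e \<inter> f. \<forall>b\<in>e \<inter> f. a = b"
    using card_le_Suc0_iff_eq by blast
  then show ?thesis using assms(4,5) by blast
qed

lemma edge_eq_V_if_card_V_le_1:
  assumes "card V \<le> 1" "e \<in> E"
  shows "e = V"
proof (rule card_seteq[OF finite_V edge_subset[OF assms(2)]])
  show "card V \<le> card e"
    using assms finite_edge edge_nonempty card_0_eq by fastforce
qed

lemma card_Union_star:
  assumes "star E v \<noteq> {}"
  shows "card (\<Union> (star E v)) = Suc (\<Sum>f\<in>star E v. card f - 1)"
proof -
  have "\<Union> (star E v) - {v} = (\<Union>f\<in>star E v. f - {v})"
    by blast
  also have "card \<dots> = (\<Sum>f\<in>star E v. card (f - {v}))"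
  proof (rule card_UN_disjoint)
    show "\<forall>f\<in>star E v. \<forall>g\<in>star E v. f \<noteq> g \<longrightarrow> (f - {v}) \<inter> (g - {v}) = {}"
    proof (intro ballI impI)
      fix f g assume "f \<in> star E v" "g \<in> star E v" "f \<noteq> g"
      then have "f \<inter> g = {v}" using edge_inter_eq by (simp add: star_def)
      then show "(f - {v}) \<inter> (g - {v}) = {}" by auto
    qed
  qed (use finite_star finite_edge in \<open>auto simp: star_def\<close>)
  also have "\<dots> = (\<Sum>f\<in>star E v. card f - 1)"
    by (rule sum.cong) (auto simp: star_def)
  finally have "card (\<Union> (star E v) - {v}) = (\<Sum>f\<in>star E v. card f - 1)" .
  moreover have "v \<in> \<Union> (star E v)" and "finite (\<Union> (star E v))"
    using assms finite_star finite_edge by (auto simp: star_def)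
  ultimately show ?thesis
    using card.remove by metis
qed

lemma star_card_bound:
  assumes "star E v \<noteq> {}" and "\<forall>f\<in>star E v. k \<le> card f"
  shows "Suc (card (star E v) * (k - 1)) \<le> card V"
proof -
  have "card (star E v) * (k - 1) \<le> (\<Sum>f\<in>star E v. card f - 1)"
    using sum_bounded_below[of "star E v" "k - 1"] assms(2) by (simp add: diff_le_mono)
  moreover have "card (\<Union> (star E v)) \<le> card V"
    using edge_subset by (intro card_mono finite_V) (auto simp: star_def)
  ultimately show ?thesis
    using card_Union_star[OF assms(1)] by simp
qed

lemma star_card_bound_eq:
  assumes ne: "star E v \<noteq> {}" and ge: "\<forall>f\<in>star E v. k \<le> card f" and "1 \<le> k"
    and eq: "Suc (card (star E v) * (k - 1)) = card V"
  shows "\<forall>f\<in>star E v. card f = k" and "\<Union> (star E v) = V"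
proof -
  have sub: "\<Union> (star E v) \<subseteq> V"
    using edge_subset by (auto simp: star_def)
  have lower: "(\<Sum>f\<in>star E v. k - 1) \<le> (\<Sum>f\<in>star E v. card f - 1)"
    using ge by (intro sum_mono) (simp add: diff_le_mono)
  have "card (\<Union> (star E v)) \<le> card V"
    using sub by (intro card_mono finite_V)
  then have sums: "(\<Sum>f\<in>star E v. k - 1) = (\<Sum>f\<in>star E v. card f - 1)"
    using lower eq card_Union_star[OF ne] by simp
  show "\<forall>f\<in>star E v. card f = k"
  proof
    fix f assume f: "f \<in> star E v"
    have "k - 1 = card f - 1"
      using sum_mono_inv[OF sums _ f finite_star] ge by (simp add: diff_le_mono)
    moreover have "k \<le> card f" using ge f by blast
    ultimately show "card f = k" using \<open>1 \<le> k\<close> by linarith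
  qed
  show "\<Union> (star E v) = V"
    using card_subset_eq[OF finite_V sub] sums eq card_Union_star[OF ne] by simp
qed

lemma card_edge_neighbours:
  assumes e: "e \<in> E"
  shows "card (edge_neighbours E e) = (\<Sum>v\<in>e. card (star E v) - 1)"
proof -
  have "edge_neighbours E e = (\<Union>v\<in>e. star E v - {e})"
    unfolding edge_neighbours_def star_def by blast
  moreover have "card (\<Union>v\<in>e. star E v - {e}) = (\<Sum>v\<in>e. card (star E v - {e}))"
  proof (rule card_UN_disjoint)
    show "\<forall>u\<in>e. \<forall>w\<in>e. u \<noteq> w \<longrightarrow> (star E u - {e}) \<inter> (star E w - {e}) = {}"
      using edge_inter_eq[OF _ e] by (fastforce simp: star_def)
  qed (use finite_edge[OF e] finite_star in auto)
  moreover have "card (star E v - {e}) = card (star E v) - 1" if "v \<in> e" for v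
    using that e finite_star by (simp add: star_def)
  ultimately show ?thesis by simp
qed

lemma card_star_meeting:
  assumes L: "L \<in> E" and "x \<notin> L" and cover: "L \<subseteq> \<Union> (star E x)"
  shows "card {h \<in> star E x. h \<inter> L \<noteq> {}} = card L"
proof -
  let ?M = "{h \<in> star E x. h \<inter> L \<noteq> {}}"
  have "L = (\<Union>h\<in>?M. h \<inter> L)"
    using cover by blast
  moreover have "card (\<Union>h\<in>?M. h \<inter> L) = (\<Sum>h\<in>?M. card (h \<inter> L))"
  proof (rule card_UN_disjoint)
    show "\<forall>h\<in>?M. \<forall>j\<in>?M. h \<noteq> j \<longrightarrow> (h \<inter> L) \<inter> (j \<inter> L) = {}"
    proof (intro ballI impI)
      fix h j assume "h \<in> ?M" "j \<in> ?M" "h \<noteq> j"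
      then have "h \<inter> j = {x}" using edge_inter_eq by (simp add: star_def)
      then show "(h \<inter> L) \<inter> (j \<inter> L) = {}" using \<open>x \<notin> L\<close> by auto
    qed
  qed (use finite_star finite_edge[OF L] in auto)
  moreover have "card (h \<inter> L) = 1" if "h \<in> ?M" for h
  proof -
    have "h \<noteq> L" using that \<open>x \<notin> L\<close> by (auto simp: star_def)
    then have "card (h \<inter> L) \<le> 1"
      using that L card_edge_inter_le by (simp add: star_def)
    moreover have "card (h \<inter> L) \<noteq> 0"
      using that finite_edge[OF L] by simp
    ultimately show ?thesis by linarith
  qed
  ultimately show ?thesis by simp
qed

lemma min_edge_tight:
  assumes e: "e \<in> E" and min: "\<forall>f\<in>E. card e \<le> card f"
    and sq: "card V \<le> card e * card e" and many: "card V \<le> card (edge_neighbours E e)"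
  shows "card e * card e = card V" and "2 \<le> card e"
    and "\<forall>v\<in>e. card (star E v) = Suc (card e) \<and> (\<forall>f\<in>star E v. card f = card e)
           \<and> \<Union> (star E v) = V"
proof -
  define k where "k = card e"
  define n where "n = card V"
  define d where "d v = card (star E v)" for v
  have star_ne: "star E v \<noteq> {}" if "v \<in> e" for v
    using e that by (auto simp: star_def)
  have d_pos: "1 \<le> d v" if "v \<in> e" for v
    using star_ne[OF that] finite_star by (simp add: d_def Suc_le_eq card_gt_0_iff)
  have kn: "k \<le> n"
    unfolding k_def n_def by (intro card_mono finite_V edge_subset e)
  have "1 \<le> n"
    using kn e edge_nonempty finite_edge card_0_eq by (fastforce simp: k_def)
  show k2: "2 \<le> card e"
  proof (rule ccontr)
    assume "\<not> 2 \<le> card e"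
    then have "card e * card e \<le> 1 * 1" by (intro mult_le_mono) auto
    then have "card V \<le> 1" using sq by simp
    then have "edge_neighbours E e = {}"
      using edge_eq_V_if_card_V_le_1 e by (auto simp: edge_neighbours_def)
    then show False using many \<open>1 \<le> n\<close> by (simp add: n_def)
  qed
  have bound: "(d v - 1) * (k - 1) \<le> n - k" if "v \<in> e" for v
  proof -
    have "Suc (d v * (k - 1)) \<le> n"
      using star_card_bound[OF star_ne[OF that]] min by (simp add: d_def k_def n_def star_def)
    moreover have "d v * (k - 1) = (d v - 1) * (k - 1) + (k - 1)"
      using d_pos[OF that] by (simp add: diff_mult_distrib)
    ultimately show ?thesis using k2 by (simp add: k_def)
  qed
  have neighbours: "(\<Sum>v\<in>e. (d v - 1) * (k - 1)) = card (edge_neighbours E e) * (k - 1)"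
    using card_edge_neighbours[OF e] by (simp add: d_def sum_distrib_right)
  have lower: "n * (k - 1) \<le> (\<Sum>v\<in>e. (d v - 1) * (k - 1))"
    unfolding neighbours using many by (simp add: n_def)
  moreover have upper: "(\<Sum>v\<in>e. (d v - 1) * (k - 1)) \<le> k * (n - k)"
    using sum_bounded_above[of e "\<lambda>v. (d v - 1) * (k - 1)" "n - k"] bound by (simp add: k_def)
  ultimately have "n * (k - 1) \<le> k * (n - k)" by linarith
  then have "k * k \<le> n" using square_le_if_mult_le kn by blast
  then show square: "card e * card e = card V"
    using sq by (simp add: k_def n_def)
  then have "n * (k - 1) = k * (n - k)"
    by (simp add: k_def n_def diff_mult_distrib diff_mult_distrib2 mult.commute)
  then have sums: "(\<Sum>v\<in>e. (d v - 1) * (k - 1)) = (\<Sum>v\<in>e. n - k)"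
    using lower upper by (simp add: k_def)
  show "\<forall>v\<in>e. card (star E v) = Suc (card e) \<and> (\<forall>f\<in>star E v. card f = card e)
          \<and> \<Union> (star E v) = V"
  proof
    fix v assume v: "v \<in> e"
    have "(d v - 1) * (k - 1) = k * (k - 1)"
      using sum_mono_inv[OF sums bound v finite_edge[OF e]] square
      by (simp add: k_def n_def diff_mult_distrib2)
    then have dv: "d v = Suc k"
      using k2 d_pos[OF v] by (simp add: k_def)
    then have eq: "Suc (card (star E v) * (k - 1)) = card V"
      using square \<open>1 \<le> n\<close> by (simp add: d_def k_def n_def algebra_simps diff_mult_distrib2)
    have ge: "\<forall>f\<in>star E v. k \<le> card f"
      using min by (simp add: star_def k_def)
    have "1 \<le> k" using k2 by (simp add: k_def)
    note tight = star_card_bound_eq[OF star_ne[OF v] ge \<open>1 \<le> k\<close> eq]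
    show "card (star E v) = Suc (card e) \<and> (\<forall>f\<in>star E v. card f = card e)
          \<and> \<Union> (star E v) = V"
      using dv tight unfolding d_def k_def by blast
  qed
qed

end

locale affine_plane = linear_hg +
  fixes q :: nat
  assumes card_edge: "e \<in> E \<Longrightarrow> card e = q"
    and card_star: "x \<in> V \<Longrightarrow> card (star E x) = Suc q"
    and Union_star: "x \<in> V \<Longrightarrow> \<Union> (star E x) = V"
begin

(* Playfair's axiom, with L counted as parallel to itself. *)
lemma ex1_parallel_through:
  assumes x: "x \<in> V" and L: "L \<in> E"
  shows "\<exists>!h. h \<in> star E x \<and> (h = L \<or> h \<inter> L = {})"
proof (cases "x \<in> L")
  case True
  show ?thesis
  proof (rule ex1I)
    show "L \<in> star E x \<and> (L = L \<or> L \<inter> L = {})"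
      using L True by (simp add: star_def)
    show "h = L" if "h \<in> star E x \<and> (h = L \<or> h \<inter> L = {})" for h
      using that True by (auto simp: star_def)
  qed
next
  case False
  let ?M = "{h \<in> star E x. h \<inter> L \<noteq> {}}"
  have cover: "L \<subseteq> \<Union> (star E x)"
    using Union_star[OF x] edge_subset[OF L] by simp
  have "card ?M = q"
    using card_star_meeting[OF L False cover] card_edge[OF L] by simp
  moreover have "card (star E x - ?M) = card (star E x) - card ?M"
    using finite_star by (intro card_Diff_subset) auto
  ultimately have "card (star E x - ?M) = Suc 0"
    using card_star[OF x] by simp
  then obtain h where h: "star E x - ?M = {h}"
    by (auto simp: card_1_singleton_iff)
  show ?thesis
  proof (rule ex1I)
    have "h \<in> star E x - ?M" using h by simp
    then show "h \<in> star E x \<and> (h = L \<or> h \<inter> L = {})" by simp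
    show "g = h" if g: "g \<in> star E x \<and> (g = L \<or> g \<inter> L = {})" for g
    proof -
      have "g \<noteq> L" using g False by (auto simp: star_def)
      then have "g \<in> star E x - ?M" using g by simp
      then show "g = h" using h by simp
    qed
  qed
qed

lemma proper_edge_coloring_parallel_classes: "\<exists>c. proper_edge_coloring E (Suc q) c"
proof (cases "V = {}")
  case True
  then have "E = {}" using edge_subset edge_nonempty by blast
  then show ?thesis by (simp add: proper_edge_coloring_def)
next
  case False
  then obtain p where p: "p \<in> V" by blast
  define par where "par L = (THE h. h \<in> star E p \<and> (h = L \<or> h \<inter> L = {}))" for L
  have par: "par L \<in> star E p \<and> (par L = L \<or> par L \<inter> L = {})" if "L \<in> E" for L
    unfolding par_def using theI'[OF ex1_parallel_through[OF p that]] .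
  have classes_disjoint: "\<forall>f\<in>E. \<forall>g\<in>E. f \<noteq> g \<and> f \<inter> g \<noteq> {} \<longrightarrow> par f \<noteq> par g"
  proof (intro ballI impI notI)
    fix f g assume f: "f \<in> E" and g: "g \<in> E" and fg: "f \<noteq> g \<and> f \<inter> g \<noteq> {}"
      and same: "par f = par g"
    obtain x where x: "x \<in> f" "x \<in> g" using fg by blast
    have "x \<in> V" using edge_subset f x by blast
    have "par f \<in> E" using par[OF f] by (simp add: star_def)
    have "f \<in> star E x \<and> (f = par f \<or> f \<inter> par f = {})"
      using par[OF f] f x by (auto simp: star_def)
    moreover have "g \<in> star E x \<and> (g = par f \<or> g \<inter> par f = {})"
      using par[OF g] same g x by (auto simp: star_def)
    ultimately have "f = g"
      using ex1_parallel_through[OF \<open>x \<in> V\<close> \<open>par f \<in> E\<close>] by blast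
    then show False using fg by blast
  qed
  have "\<forall>f\<in>E. par f \<in> star E p" using par by blast
  from proper_edge_coloring_from_labels[OF finite_star this classes_disjoint]
  show ?thesis unfolding card_star[OF p] .
qed

end

lemma (in linear_hg) affine_plane_if_neighbourhoods_large:
  assumes e: "e \<in> E" and min: "\<forall>f\<in>E. card e \<le> card f" and sq: "card V \<le> card e * card e"
    and many: "\<forall>f\<in>E. card V \<le> card (edge_neighbours E f)"
  shows "affine_plane V E (card e)"
proof -
  have at_min_edge: "\<forall>v\<in>f. card (star E v) = Suc (card e) \<and> (\<forall>g\<in>star E v. card g = card e)
      \<and> \<Union> (star E v) = V" if "f \<in> E" "card f = card e" for f
    using min_edge_tight(3)[of f] that min sq many by simp
  obtain p where p: "p \<in> e" using edge_nonempty e by blast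
  have at_vertex: "card (star E x) = Suc (card e) \<and> (\<forall>g\<in>star E x. card g = card e)
      \<and> \<Union> (star E x) = V" if "x \<in> V" for x
  proof -
    obtain f where f: "f \<in> star E p" "x \<in> f"
      using at_min_edge[OF e refl] p \<open>x \<in> V\<close> by blast
    have "f \<in> E" "card f = card e"
      using f at_min_edge[OF e refl] p by (auto simp: star_def)
    then show ?thesis using at_min_edge f(2) by blast
  qed
  show ?thesis
  proof unfold_locales
    fix h assume h: "h \<in> E"
    then obtain x where x: "x \<in> h" using edge_nonempty by blast
    then have "x \<in> V" using edge_subset h by blast
    then show "card h = card e"
      using at_vertex h x by (simp add: star_def)
  qed (use at_vertex in auto)
qed

lemma linear_hypergraph_subset:
  assumes "linear_hypergraph V E" and "E' \<subseteq> E"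
  shows "linear_hypergraph V E'"
  using assms finite_subset[OF assms(2)] subsetD[OF assms(2)]
  unfolding linear_hypergraph_def hypergraph_def by simp

theorem linear_hypergraph_edge_colorable:
  assumes "linear_hypergraph V E" and "\<forall>e\<in>E. card V \<le> card e * card e"
  shows "\<exists>c. proper_edge_coloring E (card V) c"
  using assms
proof (induction "card E" arbitrary: E rule: less_induct)
  case less
  interpret linear_hg V E using less.prems(1) by (rule linear_hg.intro)
  show ?case
  proof (cases "\<exists>e\<in>E. card (edge_neighbours E e) < card V")
    case True
    then obtain e where e: "e \<in> E" "card (edge_neighbours E e) < card V" by blast
    have "\<exists>c. proper_edge_coloring (E - {e}) (card V) c"
      using less.hyps[of "E - {e}"] card_Diff1_less[OF finite_E e(1)]
        linear_hypergraph_subset[OF less.prems(1)] less.prems(2) by blast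
    then show ?thesis using proper_edge_coloring_extend[OF finite_E _ e(2)] by blast
  next
    case False
    then have many: "\<forall>f\<in>E. card V \<le> card (edge_neighbours E f)" by (simp add: not_less)
    show ?thesis
    proof (cases "E = {}")
      case True
      then show ?thesis unfolding proper_edge_coloring_def by blast
    next
      case False
      then obtain e where e: "e \<in> E" and min: "\<forall>f\<in>E. card e \<le> card f"
        using ex_has_least_nat[of "\<lambda>f. f \<in> E" _ card] by blast
      have sq: "card V \<le> card e * card e" using less.prems(2) e by blast
      have "affine_plane V E (card e)"
        using affine_plane_if_neighbourhoods_large[OF e min sq many] .
      have "2 \<le> card e" and "card e * card e = card V"
        using min_edge_tight(1,2)[OF e min sq] many e by auto
      then have "Suc (card e) \<le> card V"
        using mult_le_mono1[of 2 "card e" "card e"] by simp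
      moreover obtain c where "proper_edge_coloring E (Suc (card e)) c"
        using affine_plane.proper_edge_coloring_parallel_classes[OF \<open>affine_plane V E (card e)\<close>]
        by blast
      ultimately show ?thesis
        using proper_edge_coloring_mono by blast
    qed
  qed
qed

lemma card_square_ge_if_antirank_ge_sqrt:
  assumes "finite E" and "e \<in> E" and "antirank E \<ge> ereal (sqrt (real n))"
  shows "n \<le> card e * card e"
proof -
  have "E \<noteq> {}" using assms(2) by blast
  then have "sqrt (real n) \<le> real (Min (card ` E))"
    using assms(3) unfolding antirank_def by simp
  also have "\<dots> \<le> real (card e)"
    using assms(1,2) by simp
  finally have "real n \<le> real (card e) ^ 2"
    by (rule sqrt_le_D)
  then show ?thesis
    by (simp add: power2_eq_square flip: of_nat_mult)
qed

theorem corollary5p6: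
  fixes V :: "'a set" and E :: "'a set set" and n :: nat
  assumes "linear_hypergraph V E"
    and "card V = n"
    and "antirank E \<ge> ereal (sqrt (real n))"
  shows "chromatic_index E \<le> n"
proof -
  have "finite E"
    using linear_hg.finite_E[OF linear_hg.intro[OF assms(1)]] .
  then have "\<forall>e\<in>E. card V \<le> card e * card e"
    using card_square_ge_if_antirank_ge_sqrt assms(2,3) by blast
  then obtain c where "proper_edge_coloring E (card V) c"
    using linear_hypergraph_edge_colorable assms(1) by blast
  then show ?thesis
    using chromatic_index_le assms(2) by blast
qed

end
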